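(* Let $G$ be a graph of order $n$ such that both $G$ and its complement $\bar G$ are connected. Then $b(G)\, b(\bar G)\leq n+4$, and equality holds if and only if $G$ is (isomorphic to) the cycle $C_5$.
   Context: Burning process on a finite graph $G$: initially all vertices are unburned. In each round, every already burned vertex spreads fire to all of its neighbors, which become burned, and at the same time one chooses an unburned vertex (if any remains) and changes its status to burned; burned vertices remain burned. The burning number $b(G)$ is the minimum number of rounds needed to burn all vertices of $G$. $\bar G$ is the complement graph of $G$. *)

theory Defs
  imports Main
begin

definition simple_graph :: "'a set \<Rightarrow> ('a \<Rightarrow> 'a \<Rightarrow> bool) \<Rightarrow> bool" where
  "simple_graph V E \<longleftrightarrow> finite V \<and> (\<forall>u v. E u v \<longrightarrow> u \<in> V \<and> v \<in> V)
     \<and> (\<forall>u v. E u v \<longrightarrow> E v u) \<and> (\<forall>u. \<not> E u u)"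

definition complement :: "'a set \<Rightarrow> ('a \<Rightarrow> 'a \<Rightarrow> bool) \<Rightarrow> 'a \<Rightarrow> 'a \<Rightarrow> bool" where
  "complement V E = (\<lambda>u v. u \<in> V \<and> v \<in> V \<and> u \<noteq> v \<and> \<not> E u v)"

definition connected_graph :: "'a set \<Rightarrow> ('a \<Rightarrow> 'a \<Rightarrow> bool) \<Rightarrow> bool" where
  "connected_graph V E \<longleftrightarrow>
     (\<forall>u\<in>V. \<forall>v\<in>V. (\<lambda>x y. x \<in> V \<and> y \<in> V \<and> E x y)\<^sup>*\<^sup>* u v)"

text \<open>Burned set before round t+1 (i.e. after t rounds) when the sources chosen in
  rounds 1,2,... are xs!0, xs!1, ...: each round the fire spreads to all neighbours of
  burned vertices and the chosen source becomes burned.\<close>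
fun burned :: "'a set \<Rightarrow> ('a \<Rightarrow> 'a \<Rightarrow> bool) \<Rightarrow> 'a list \<Rightarrow> nat \<Rightarrow> 'a set" where
  "burned V E xs 0 = {}"
| "burned V E xs (Suc t) = burned V E xs t \<union> {v \<in> V. \<exists>u \<in> burned V E xs t. E u v}
     \<union> (if t < length xs then {xs ! t} else {})"

definition burning_seq :: "'a set \<Rightarrow> ('a \<Rightarrow> 'a \<Rightarrow> bool) \<Rightarrow> 'a list \<Rightarrow> bool" where
  "burning_seq V E xs \<longleftrightarrow> set xs \<subseteq> V
     \<and> (\<forall>t < length xs. xs ! t \<notin> burned V E xs t)
     \<and> V \<subseteq> burned V E xs (length xs)"

definition burning_number :: "'a set \<Rightarrow> ('a \<Rightarrow> 'a \<Rightarrow> bool) \<Rightarrow> nat" where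
  "burning_number V E = (LEAST k. \<exists>xs. burning_seq V E xs \<and> length xs = k)"

definition iso_C5 :: "'a set \<Rightarrow> ('a \<Rightarrow> 'a \<Rightarrow> bool) \<Rightarrow> bool" where
  "iso_C5 V E \<longleftrightarrow> (\<exists>f. bij_betw f V {0..<(5::nat)} \<and>
     (\<forall>u\<in>V. \<forall>v\<in>V. E u v \<longleftrightarrow> ((f u + 1) mod 5 = f v \<or> (f v + 1) mod 5 = f u)))"

end

theory Submission
  imports Defs
begin

text \<open>After k rounds with sources x1, ..., xk the burned set contains the balls of radii
  k-1, ..., 1, 0 around them, and any list of sources whose balls cover V can be repaired into
  a valid burning sequence; so b(G) \<le> k as soon as such balls cover V. In a
  breadth-first-search tree, removing the subtree below the (k-1)-st ancestor of a deepest
  vertex shows that k balls suffice whenever n \<le> k(k+1)/2 + 1, and for the least such k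
  (tri_index n) one has 2k < n + 4. This settles the case that G or its complement has
  burning number at most 2.
  Otherwise neither graph has a vertex adjacent to all but at most one other vertex, so both
  have minimum degree at least 2. For n = 5 this forces G to be C5, which is self-complementary
  with burning number 3. For n \<ge> 6: if G has two vertices at distance at least 3, then
  the complement has radius at most 2, hence burning number at most 3, and 3k < n + 4 unless
  n = 8, where a direct argument gives b(G) \<le> 3; symmetrically with the roles exchanged;
  and if both graphs have diameter at most 2, both burning numbers are at most 3.\<close>

fun nbhd :: "('a \<Rightarrow> 'a \<Rightarrow> bool) \<Rightarrow> 'a \<Rightarrow> nat \<Rightarrow> 'a set" where
  "nbhd E x 0 = {x}"
| "nbhd E x (Suc r) = nbhd E x r \<union> {v. \<exists>u\<in>nbhd E x r. E u v}"

lemma nbhd_1: "nbhd E x 1 = insert x {v. E x v}"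
  by auto

lemma nbhd_2: "nbhd E x 2 = insert x {v. E x v} \<union> {v. \<exists>u. (u = x \<or> E x u) \<and> E u v}"
  by (auto simp: numeral_2_eq_2)

lemma center_in_nbhd: "x \<in> nbhd E x r"
  by (induction r) auto

lemma nbhd_mono: "r \<le> s \<Longrightarrow> nbhd E x r \<subseteq> nbhd E x s"
  by (induction s) (auto simp: le_Suc_eq)

lemma nbhd_subset: "simple_graph V E \<Longrightarrow> x \<in> V \<Longrightarrow> nbhd E x r \<subseteq> V"
  by (induction r) (auto simp: simple_graph_def)

lemma nbhd_Suc_subset: "x \<in> nbhd E y 1 \<Longrightarrow> nbhd E x r \<subseteq> nbhd E y (Suc r)"
  by (induction r) auto

lemma nbhd_1_sym: "simple_graph V E \<Longrightarrow> w \<in> nbhd E v 1 \<Longrightarrow> v \<in> nbhd E w 1"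
  by (auto simp: simple_graph_def nbhd_1)

definition ball_cover :: "('a \<Rightarrow> 'a \<Rightarrow> bool) \<Rightarrow> 'a list \<Rightarrow> 'a set \<Rightarrow> bool" where
  "ball_cover E ys R \<longleftrightarrow> (\<forall>v\<in>R. \<exists>i<length ys. v \<in> nbhd E (ys ! i) (length ys - Suc i))"

lemma ball_cover_Nil [simp]: "ball_cover E [] R \<longleftrightarrow> R = {}"
  by (auto simp: ball_cover_def)

lemma ball_cover_Cons [simp]:
  "ball_cover E (a # ys) R \<longleftrightarrow> ball_cover E ys (R - nbhd E a (length ys))"
  by (auto simp: ball_cover_def Ex_less_Suc2)

lemma ball_cover_subset: "ball_cover E ys R \<Longrightarrow> R' \<subseteq> R \<Longrightarrow> ball_cover E ys R'"
  by (auto simp: ball_cover_def)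

lemma nbhd_subset_burned:
  assumes "simple_graph V E" "i < t" "i < length xs"
  shows "nbhd E (xs ! i) (t - Suc i) \<subseteq> burned V E xs t"
  using assms(2)
proof (induction t)
  case (Suc t)
  show ?case
  proof (cases "i = t")
    case False
    with Suc.prems have "Suc t - Suc i = Suc (t - Suc i)" "i < t" by auto
    with Suc.IH assms(1) show ?thesis by (auto simp: simple_graph_def)
  qed (use assms(3) in auto)
qed simp

lemma ball_cover_burned:
  "simple_graph V E \<Longrightarrow> ball_cover E ys V \<Longrightarrow> V \<subseteq> burned V E ys (length ys)"
  unfolding ball_cover_def using nbhd_subset_burned by blast

lemma burned_cong:
  assumes "\<And>i. i < t \<Longrightarrow> i < length xs \<longleftrightarrow> i < length ys"
    and "\<And>i. i < t \<Longrightarrow> i < length xs \<Longrightarrow> xs ! i = ys ! i"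
  shows "burned V E xs t = burned V E ys t"
  using assms by (induction t) auto

lemma burned_subset_update:
  assumes "t < length ys" "ys ! t \<in> burned V E ys t"
  shows "burned V E ys s \<subseteq> burned V E (ys[t := w]) s"
proof (induction s)
  case (Suc s)
  have "ys ! s \<in> burned V E (ys[t := w]) (Suc s)" if "s < length ys"
  proof (cases "s = t")
    case True
    with Suc.IH assms(2) show ?thesis by auto
  qed (use that in auto)
  with Suc.IH show ?case by auto
qed simp

lemma burning_seq_take:
  assumes "t \<le> length ys" "set ys \<subseteq> V" "V \<subseteq> burned V E ys t"
    and "\<forall>i<t. ys ! i \<notin> burned V E ys i"
  shows "burning_seq V E (take t ys)"
proof -
  have "burned V E (take t ys) i = burned V E ys i" if "i \<le> t" for i
    by (rule burned_cong) (use that assms(1) in auto)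
  with assms show ?thesis
    by (auto simp: burning_seq_def min_absorb2 dest: in_set_takeD)
qed

lemma replace_burned_source:
  assumes "t < length ys" "set ys \<subseteq> V" "V \<subseteq> burned V E ys (length ys)"
    and "\<forall>i<t. ys ! i \<notin> burned V E ys i" and "ys ! t \<in> burned V E ys t"
    and "w \<in> V" "w \<notin> burned V E ys t"
  shows "set (ys[t := w]) \<subseteq> V" "V \<subseteq> burned V E (ys[t := w]) (length ys)"
    "\<forall>i<Suc t. ys[t := w] ! i \<notin> burned V E (ys[t := w]) i"
proof -
  have same: "burned V E (ys[t := w]) i = burned V E ys i" if "i \<le> t" for i
    by (rule burned_cong) (use that in auto)
  show "set (ys[t := w]) \<subseteq> V"
    using assms(2,6) set_update_subset_insert[of ys t w] by auto
  show "V \<subseteq> burned V E (ys[t := w]) (length ys)"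
    using assms(3) burned_subset_update[OF assms(1,5)] by blast
  show "\<forall>i<Suc t. ys[t := w] ! i \<notin> burned V E (ys[t := w]) i"
    using assms(1,4,7) same by (auto simp: less_Suc_eq)
qed

text \<open>Scanning the sources from the left: stop as soon as everything is burned, and replace a
  source that is already burned when chosen by an unburned vertex.\<close>
lemma burning_seq_of_burned:
  assumes "set ys \<subseteq> V" "V \<subseteq> burned V E ys (length ys)"
  shows "\<exists>xs. burning_seq V E xs \<and> length xs \<le> length ys"
proof -
  have "\<exists>xs. burning_seq V E xs \<and> length xs \<le> length ys"
    if "t \<le> length ys" "set ys \<subseteq> V" "V \<subseteq> burned V E ys (length ys)"
      "\<forall>i<t. ys ! i \<notin> burned V E ys i" for t ys
    using that
  proof (induction "length ys - t" arbitrary: ys t)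
    case 0
    then have "burning_seq V E (take t ys)" by (intro burning_seq_take) auto
    with "0.prems"(1) show ?case by (intro exI[of _ "take t ys"]) auto
  next
    case (Suc d)
    then have t: "t < length ys" by simp
    consider "ys ! t \<notin> burned V E ys t" | "V \<subseteq> burned V E ys t"
      | w where "ys ! t \<in> burned V E ys t" "w \<in> V" "w \<notin> burned V E ys t"
      by blast
    then show ?case
    proof cases
      case 1
      with Suc.prems have "\<forall>i<Suc t. ys ! i \<notin> burned V E ys i" by (auto simp: less_Suc_eq)
      moreover have "d = length ys - Suc t" using Suc.hyps(2) by simp
      ultimately show ?thesis using Suc.hyps(1) Suc.prems(2,3) t by simp
    next
      case 2
      with Suc.prems t have "burning_seq V E (take t ys)" by (intro burning_seq_take) auto
      then show ?thesis by (intro exI[of _ "take t ys"]) auto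
    next
      case 3
      note upd = replace_burned_source[OF t Suc.prems(2-4) 3]
      have "d = length (ys[t := w]) - Suc t" using Suc.hyps(2) by simp
      with Suc.hyps(1)[OF this] upd t show ?thesis by simp
    qed
  qed
  with assms show ?thesis by blast
qed

lemma burning_number_le: "burning_seq V E xs \<Longrightarrow> length xs \<le> k \<Longrightarrow> burning_number V E \<le> k"
  unfolding burning_number_def by (rule le_trans[OF Least_le]) auto

lemma burning_number_attained:
  "burning_seq V E xs \<Longrightarrow> \<exists>ys. burning_seq V E ys \<and> length ys = burning_number V E"
  unfolding burning_number_def by (rule LeastI_ex) auto

lemma burning_number_empty [simp]: "burning_number {} E = 0"
  using burning_number_le[of "{}" E "[]" 0] by (simp add: burning_seq_def)

lemma burning_seq_of_ball_cover:
  "simple_graph V E \<Longrightarrow> set ys \<subseteq> V \<Longrightarrow> ball_cover E ys V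
   \<Longrightarrow> \<exists>xs. burning_seq V E xs \<and> length xs \<le> length ys"
  using burning_seq_of_burned ball_cover_burned by blast

lemma burning_number_le_ball_cover:
  "simple_graph V E \<Longrightarrow> set ys \<subseteq> V \<Longrightarrow> ball_cover E ys V \<Longrightarrow> burning_number V E \<le> length ys"
  using burning_seq_of_ball_cover burning_number_le by blast

lemma burning_number_le_3:
  assumes "simple_graph V E" "x \<in> V" "y \<in> V" "z \<in> V"
    and "V \<subseteq> nbhd E x 2 \<union> nbhd E y 1 \<union> {z}"
  shows "burning_number V E \<le> 3"
proof -
  have "ball_cover E [x, y, z] V"
    using assms(5) by (auto simp: numeral_2_eq_2)
  from burning_number_le_ball_cover[OF assms(1) _ this] assms(2-4) show ?thesis
    by (simp add: numeral_3_eq_3)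
qed

lemma burning_number_le_2_iff:
  assumes "simple_graph V E" "burning_seq V E xs" "V \<noteq> {}"
  shows "burning_number V E \<le> 2 \<longleftrightarrow> (\<exists>x\<in>V. \<exists>y. V \<subseteq> nbhd E x 1 \<union> {y})"
proof
  assume "burning_number V E \<le> 2"
  moreover obtain ys where ys: "burning_seq V E ys" "length ys = burning_number V E"
    using burning_number_attained[OF assms(2)] by blast
  ultimately consider "ys = []" | a where "ys = [a]" | a b where "ys = [a, b]"
    by (metis One_nat_def Suc_1 le_Suc_eq le_zero_eq length_0_conv length_Suc_conv)
  then show "\<exists>x\<in>V. \<exists>y. V \<subseteq> nbhd E x 1 \<union> {y}"
  proof cases
    case 1
    with ys(1) assms(3) show ?thesis by (auto simp: burning_seq_def)
  next
    case (2 a)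
    with ys(1) have "a \<in> V" "V \<subseteq> nbhd E a 1 \<union> {a}" by (auto simp: burning_seq_def)
    then show ?thesis by blast
  next
    case (3 a b)
    with ys(1) have "a \<in> V" "V \<subseteq> nbhd E a 1 \<union> {b}" by (auto simp: burning_seq_def nbhd_1)
    then show ?thesis by blast
  qed
next
  assume "\<exists>x\<in>V. \<exists>y. V \<subseteq> nbhd E x 1 \<union> {y}"
  then obtain x y where "x \<in> V" "V \<subseteq> nbhd E x 1 \<union> {y}" by blast
  then have "set [x, if y \<in> V then y else x] \<subseteq> V" "ball_cover E [x, if y \<in> V then y else x] V"
    by auto
  from burning_number_le_ball_cover[OF assms(1) this] show "burning_number V E \<le> 2" by simp
qed

locale rooted_tree =
  fixes V :: "'a set" and E :: "'a \<Rightarrow> 'a \<Rightarrow> bool" and \<rho> :: 'a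
    and h :: "'a \<Rightarrow> nat" and p :: "'a \<Rightarrow> 'a"
  assumes simple: "simple_graph V E"
    and root_in: "\<rho> \<in> V" and parent_root: "p \<rho> = \<rho>" and depth_root: "h \<rho> = 0"
    and parent_in: "\<And>v. v \<in> V \<Longrightarrow> p v \<in> V"
    and parent_edge: "\<And>v. v \<in> V \<Longrightarrow> v \<noteq> \<rho> \<Longrightarrow> E (p v) v \<and> h v = Suc (h (p v))"
begin

lemma finite_vertex_subset: "R \<subseteq> V \<Longrightarrow> finite R"
  using simple finite_subset by (auto simp: simple_graph_def)

lemma depth_0_iff_root: "v \<in> V \<Longrightarrow> h v = 0 \<longleftrightarrow> v = \<rho>"
  using parent_edge depth_root by fastforce

lemma ancestor:
  "v \<in> V \<Longrightarrow> (p ^^ j) v \<in> V \<and> h ((p ^^ j) v) = h v - j \<and> v \<in> nbhd E ((p ^^ j) v) j"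
proof (induction j)
  case (Suc j)
  let ?w = "(p ^^ j) v"
  have "?w \<in> nbhd E (p ?w) 1" "h (p ?w) = h ?w - 1"
    using parent_edge[of ?w] Suc parent_root depth_root
    by (cases "?w = \<rho>"; auto simp: nbhd_1)+
  moreover have "v \<in> nbhd E (p ?w) (Suc j)"
    using nbhd_Suc_subset[OF calculation(1)] Suc by blast
  ultimately show ?case using Suc parent_in by simp
qed (simp add: center_in_nbhd)

lemma nbhd_root: "v \<in> V \<Longrightarrow> h v \<le> r \<Longrightarrow> v \<in> nbhd E \<rho> r"
  using ancestor[of v "h v"] depth_0_iff_root nbhd_mono by (metis diff_self_eq_0 subsetD)

lemma ancestor_closed: "\<forall>v\<in>R. p v \<in> R \<Longrightarrow> v \<in> R \<Longrightarrow> (p ^^ j) v \<in> R"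
  by (induction j) auto

text \<open>Centre: the parent of a vertex of depth at least 2; its ball of radius 1 contains
  three vertices of R.\<close>
lemma small_subtree_cover:
  assumes "R \<subseteq> V" "\<forall>v\<in>R. p v \<in> R" "card R \<le> 4"
  shows "\<exists>a\<in>V. \<exists>z\<in>V. R \<subseteq> nbhd E a 1 \<union> {z}"
proof (cases "\<forall>v\<in>R. h v \<le> 1")
  case True
  have "R \<subseteq> nbhd E \<rho> 1"
  proof
    fix v assume "v \<in> R"
    with True assms(1) show "v \<in> nbhd E \<rho> 1" by (intro nbhd_root) auto
  qed
  with root_in show ?thesis by blast
next
  case False
  then obtain w where w: "w \<in> R" "2 \<le> h w" by force
  define a where "a = p w"
  have "w \<in> V" "w \<noteq> \<rho>" using w assms(1) depth_root by auto
  with parent_edge have wa: "E a w" "h w = Suc (h a)" by (auto simp: a_def)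
  have "a \<in> R" using w assms(2) by (simp add: a_def)
  with assms(1) have "a \<in> V" "a \<noteq> \<rho>" using wa w(2) depth_root by auto
  with parent_edge have pa: "E (p a) a" "h a = Suc (h (p a))" by auto
  have "p a \<in> R" using \<open>a \<in> R\<close> assms(2) by simp
  have "E a (p a)" using pa(1) simple by (simp add: simple_graph_def)
  then have abc: "{w, a, p a} \<subseteq> R \<inter> nbhd E a 1"
    using w(1) \<open>a \<in> R\<close> \<open>p a \<in> R\<close> wa(1) by (simp add: nbhd_1)
  have "h w \<noteq> h a" "h a \<noteq> h (p a)" "h w \<noteq> h (p a)" using wa(2) pa(2) by simp_all
  then have "w \<noteq> a" "a \<noteq> p a" "w \<noteq> p a" by auto
  then have "card {w, a, p a} = 3" by simp
  moreover have fin: "finite R" using finite_vertex_subset[OF assms(1)] .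
  ultimately have "3 \<le> card (R \<inter> nbhd E a 1)"
    using card_mono[OF _ abc] by simp
  with assms(3) fin have "card (R - nbhd E a 1) \<le> 1" by (simp add: card_Diff_subset_Int)
  then have single: "\<forall>x\<in>R - nbhd E a 1. \<forall>y\<in>R - nbhd E a 1. x = y"
    using fin by (simp add: card_le_Suc0_iff_eq)
  obtain z where "z \<in> V" "R - nbhd E a 1 \<subseteq> {z}"
  proof (cases "R - nbhd E a 1 = {}")
    case False
    then obtain z where "z \<in> R - nbhd E a 1" by blast
    with single assms(1) that show ?thesis by blast
  qed (use root_in in blast)
  with \<open>a \<in> V\<close> show ?thesis by blast
qed

lemma card_path_to_ancestor:
  assumes "v \<in> V" "m \<le> h v"
  shows "card ((\<lambda>i. (p ^^ i) v) ` {0..m}) = Suc m"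
proof -
  have "inj_on (\<lambda>i. (p ^^ i) v) {0..m}"
  proof (rule inj_onI)
    fix i j assume ij: "i \<in> {0..m}" "j \<in> {0..m}" and eq: "(p ^^ i) v = (p ^^ j) v"
    have "h v - i = h v - j"
      using ancestor[OF assms(1), of i] ancestor[OF assms(1), of j] eq by metis
    with ij assms(2) show "i = j" by auto
  qed
  then show ?thesis by (simp add: card_image)
qed

lemma card_subtree_ge:
  assumes "R \<subseteq> V" "\<forall>v\<in>R. p v \<in> R" "w \<in> R" "m \<le> h w"
  shows "Suc m \<le> card {v \<in> R. \<exists>j. (p ^^ j) v = (p ^^ m) w}"
proof -
  let ?S = "{v \<in> R. \<exists>j. (p ^^ j) v = (p ^^ m) w}"
  have "finite R" using finite_vertex_subset[OF assms(1)] .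
  then have "finite ?S" by (rule rev_finite_subset) auto
  moreover have "(\<lambda>i. (p ^^ i) w) ` {0..m} \<subseteq> ?S"
  proof
    fix x assume "x \<in> (\<lambda>i. (p ^^ i) w) ` {0..m}"
    then obtain i where i: "i \<le> m" "x = (p ^^ i) w" by auto
    have "x \<in> R" using ancestor_closed[OF assms(2,3)] i(2) by simp
    moreover have "(p ^^ (m - i)) x = (p ^^ (m - i + i)) w" using i(2) by (simp add: funpow_add)
    ultimately show "x \<in> ?S" using i(1) by auto
  qed
  ultimately have "card ((\<lambda>i. (p ^^ i) w) ` {0..m}) \<le> card ?S" by (intro card_mono)
  with card_path_to_ancestor assms show ?thesis by auto
qed

text \<open>The ball of radius m around the m-th ancestor a of a deepest vertex contains the whole
  subtree S below a, which has at least m+1 vertices.\<close>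
lemma peel_subtree:
  assumes "R \<subseteq> V" "\<forall>v\<in>R. p v \<in> R" "\<exists>v\<in>R. m < h v"
  shows "\<exists>a\<in>V. \<exists>S\<subseteq>R. Suc m \<le> card S \<and> S \<subseteq> nbhd E a m \<and> (\<forall>v\<in>R - S. p v \<in> R - S)"
proof -
  have fin: "finite R" using finite_vertex_subset[OF assms(1)] .
  have "Max (h ` R) \<in> h ` R" using fin assms(3) by (intro Max_in) blast+
  then obtain w where "w \<in> R" and hw: "h w = Max (h ` R)" by (metis imageE)
  moreover have "h v \<le> h w" if "v \<in> R" for v
    unfolding hw using fin that by (intro Max_ge) auto
  ultimately have w: "w \<in> R" "\<forall>v\<in>R. h v \<le> h w" by blast+
  have "w \<in> V" using w(1) assms(1) by blast
  from assms(3) obtain v where "v \<in> R" "m < h v" by blast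
  with w(2) have "m < h w" by (meson less_le_trans)
  define a where "a = (p ^^ m) w"
  define S where "S = {v \<in> R. \<exists>j. (p ^^ j) v = a}"
  have a: "a \<in> V" "h a = h w - m" using ancestor[OF \<open>w \<in> V\<close>, of m] by (simp_all add: a_def)
  have "S \<subseteq> R" by (auto simp: S_def)
  moreover have "Suc m \<le> card S"
    using card_subtree_ge[OF assms(1,2) w(1)] \<open>m < h w\<close> by (simp add: S_def a_def)
  moreover have "S \<subseteq> nbhd E a m"
  proof
    fix v assume "v \<in> S"
    then obtain j where v: "v \<in> R" "(p ^^ j) v = a" by (auto simp: S_def)
    with assms(1) have "v \<in> V" by blast
    from ancestor[OF this, of j] v(2) have "h a = h v - j" "v \<in> nbhd E a j" by auto
    moreover have "h v \<le> h w" using w(2) v(1) by blast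
    ultimately have "j \<le> m" using a(2) \<open>m < h w\<close> by linarith
    then have "nbhd E a j \<subseteq> nbhd E a m" by (rule nbhd_mono)
    with \<open>v \<in> nbhd E a j\<close> show "v \<in> nbhd E a m" by blast
  qed
  moreover have "p v \<in> R - S" if v: "v \<in> R - S" for v
  proof -
    have "p v \<notin> S"
    proof
      assume "p v \<in> S"
      then obtain j where "(p ^^ j) (p v) = a" by (auto simp: S_def)
      then have "(p ^^ Suc j) v = a" by (simp add: funpow_Suc_right del: funpow.simps)
      with v show False unfolding S_def by blast
    qed
    with v assms(2) show ?thesis by blast
  qed
  ultimately show ?thesis using a(1) by blast
qed

lemma subtree_ball_cover:
  assumes "2 \<le> m" "R \<subseteq> V" "\<forall>v\<in>R. p v \<in> R" "2 * card R \<le> m * (m + 1) + 2"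
  shows "\<exists>ys. length ys = m \<and> set ys \<subseteq> V \<and> ball_cover E ys R"
  using assms
proof (induction m arbitrary: R rule: nat_induct_at_least)
  case base
  then have "card R \<le> 4" by simp
  with base obtain a z where "a \<in> V" "z \<in> V" "R \<subseteq> nbhd E a 1 \<union> {z}"
    using small_subtree_cover by blast
  then show ?case by (intro exI[of _ "[a, z]"]) auto
next
  case (Suc m)
  show ?case
  proof (cases "\<forall>v\<in>R. h v \<le> m")
    case True
    have "R \<subseteq> nbhd E \<rho> m"
    proof
      fix v assume "v \<in> R"
      with True Suc.prems(1) show "v \<in> nbhd E \<rho> m" by (intro nbhd_root) auto
    qed
    then have "ball_cover E (replicate m \<rho>) (R - nbhd E \<rho> m)" by (auto simp: ball_cover_def)
    then show ?thesis using root_in by (intro exI[of _ "replicate (Suc m) \<rho>"]) auto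
  next
    case False
    then obtain a S where a: "a \<in> V" and S: "S \<subseteq> R" "Suc m \<le> card S" "S \<subseteq> nbhd E a m"
      and closed: "\<forall>v\<in>R - S. p v \<in> R - S"
      using peel_subtree[OF Suc.prems(1,2)] by (meson not_le)
    have "finite R" using finite_vertex_subset[OF Suc.prems(1)] .
    with S(1) have "card (R - S) = card R - card S" "card S \<le> card R"
      by (auto intro: card_Diff_subset card_mono dest: finite_subset)
    moreover have "2 * card R \<le> m * (m + 1) + 2 * Suc m + 2"
      using Suc.prems(3) by (simp add: algebra_simps)
    ultimately have "2 * card (R - S) \<le> m * (m + 1) + 2" using S(2) by arith
    then obtain ys where ys: "length ys = m" "set ys \<subseteq> V" "ball_cover E ys (R - S)"
      using Suc.IH[of "R - S"] Suc.prems(1) closed by blast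
    have "ball_cover E ys (R - nbhd E a m)" using ys(3) S(3) ball_cover_subset by blast
    with ys a show ?thesis by (intro exI[of _ "a # ys"]) simp
  qed
qed

end

lemma connected_nbhd:
  assumes "connected_graph V E" "r \<in> V" "v \<in> V"
  shows "\<exists>d. v \<in> nbhd E r d"
proof -
  from assms have "(\<lambda>x y. x \<in> V \<and> y \<in> V \<and> E x y)\<^sup>*\<^sup>* r v"
    unfolding connected_graph_def by blast
  then show ?thesis
  proof (induction rule: rtranclp_induct)
    case base
    show ?case using center_in_nbhd by fast
  next
    case (step y z)
    then obtain d where "y \<in> nbhd E r d" by blast
    with step(2) have "z \<in> nbhd E r (Suc d)" by auto
    then show ?case by blast
  qed
qed

lemma rooted_tree_exists:
  assumes simple: "simple_graph V E" and conn: "connected_graph V E" and root: "\<rho> \<in> V"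
  shows "\<exists>h p. rooted_tree V E \<rho> h p"
proof -
  define h where "h v = (LEAST d. v \<in> nbhd E \<rho> d)" for v
  have in_depth: "v \<in> nbhd E \<rho> (h v)" if "v \<in> V" for v
    unfolding h_def using connected_nbhd[OF conn root that] by (rule LeastI_ex)
  have depth_le: "h v \<le> d" if "v \<in> nbhd E \<rho> d" for v d
    unfolding h_def using that by (rule Least_le)
  have not_below_depth: "v \<notin> nbhd E \<rho> d" if "d < h v" for v d
    using not_less_Least[of d "\<lambda>d. v \<in> nbhd E \<rho> d"] that unfolding h_def by blast
  have "h \<rho> = 0" using depth_le[of \<rho> 0] by simp
  have parent: "\<exists>u. u \<in> V \<and> E u v \<and> h v = Suc (h u)" if v: "v \<in> V" "v \<noteq> \<rho>" for v
  proof -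
    obtain d where d: "h v = Suc d" using in_depth[OF v(1)] v(2) by (cases "h v") auto
    have "v \<in> nbhd E \<rho> (Suc d)" using in_depth[OF v(1)] d by simp
    moreover have "v \<notin> nbhd E \<rho> d" using not_below_depth[of d v] d by simp
    ultimately obtain u where u: "u \<in> nbhd E \<rho> d" "E u v" by auto
    have "u \<in> V" using u(2) simple by (auto simp: simple_graph_def)
    have "h u = d"
    proof (rule antisym)
      show "h u \<le> d" using depth_le[OF u(1)] .
      have "v \<in> nbhd E \<rho> (Suc (h u))" using u(2) in_depth[OF \<open>u \<in> V\<close>] by auto
      then show "d \<le> h u" using depth_le[of v "Suc (h u)"] d by simp
    qed
    with u \<open>u \<in> V\<close> d show ?thesis by blast
  qed
  define p where "p v = (if v \<in> V \<and> v \<noteq> \<rho> then (SOME u. u \<in> V \<and> E u v \<and> h v = Suc (h u)) else \<rho>)"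
    for v
  have p: "p v \<in> V \<and> E (p v) v \<and> h v = Suc (h (p v))" if "v \<in> V" "v \<noteq> \<rho>" for v
  proof -
    have "p v = (SOME u. u \<in> V \<and> E u v \<and> h v = Suc (h u))" using that by (simp add: p_def)
    with someI_ex[OF parent[OF that]] show ?thesis by simp
  qed
  have "p \<rho> = \<rho>" by (simp add: p_def)
  with p root have "p v \<in> V" if "v \<in> V" for v using that by (cases "v = \<rho>") auto
  with p simple root \<open>h \<rho> = 0\<close> \<open>p \<rho> = \<rho>\<close> have "rooted_tree V E \<rho> h p"
    unfolding rooted_tree_def by blast
  then show ?thesis by blast
qed

lemma ball_cover_of_card:
  assumes "simple_graph V E" "connected_graph V E" "V \<noteq> {}"
    and "2 \<le> k" "2 * card V \<le> k * (k + 1) + 2"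
  shows "\<exists>ys. length ys = k \<and> set ys \<subseteq> V \<and> ball_cover E ys V"
proof -
  obtain \<rho> where "\<rho> \<in> V" using assms(3) by blast
  then obtain h p where "rooted_tree V E \<rho> h p" using rooted_tree_exists[OF assms(1,2)] by blast
  then interpret rooted_tree V E \<rho> h p .
  have "\<forall>v\<in>V. p v \<in> V" by (simp add: parent_in)
  from subtree_ball_cover[OF assms(4) subset_refl this assms(5)] show ?thesis .
qed

lemma burning_number_le_of_card:
  assumes "simple_graph V E" "connected_graph V E" "V \<noteq> {}"
    and "2 \<le> k" "2 * card V \<le> k * (k + 1) + 2"
  shows "burning_number V E \<le> k"
proof -
  obtain ys where "length ys = k" "set ys \<subseteq> V" "ball_cover E ys V"
    using ball_cover_of_card[OF assms] by blast
  with burning_number_le_ball_cover[OF assms(1)] show ?thesis by blast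
qed

lemma burning_seq_exists:
  assumes "simple_graph V E" "connected_graph V E"
  shows "\<exists>xs. burning_seq V E xs"
proof (cases "V = {}")
  case True
  then show ?thesis by (auto simp: burning_seq_def)
next
  case False
  have "2 * card V \<le> (card V + 2) * (card V + 2 + 1) + 2" by simp
  from ball_cover_of_card[OF assms False _ this] obtain ys where "set ys \<subseteq> V" "ball_cover E ys V"
    by auto
  with burning_seq_of_ball_cover[OF assms(1)] show ?thesis by blast
qed

definition tri_index :: "nat \<Rightarrow> nat" where
  "tri_index n = (LEAST k. 2 \<le> k \<and> 2 * n \<le> k * (k + 1) + 2)"

lemma tri_index: "2 \<le> tri_index n" "2 * n \<le> tri_index n * (tri_index n + 1) + 2"
proof -
  have "2 \<le> n + 2 \<and> 2 * n \<le> (n + 2) * (n + 2 + 1) + 2" by simp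
  then have "2 \<le> tri_index n \<and> 2 * n \<le> tri_index n * (tri_index n + 1) + 2"
    unfolding tri_index_def by (rule LeastI)
  then show "2 \<le> tri_index n" "2 * n \<le> tri_index n * (tri_index n + 1) + 2" by simp_all
qed

lemma tri_index_minimal: "tri_index n = 2 \<or> tri_index n * (tri_index n - 1) + 2 < 2 * n"
proof (rule ccontr)
  define k where "k = tri_index n"
  assume "\<not> ?thesis"
  then have "k \<noteq> 2" "2 * n \<le> k * (k - 1) + 2" by (auto simp: k_def)
  with tri_index(1)[of n] have "2 \<le> k - 1 \<and> 2 * n \<le> (k - 1) * (k - 1 + 1) + 2"
    by (cases k) (auto simp: k_def algebra_simps)
  then have "k \<le> k - 1" unfolding k_def tri_index_def by (rule Least_le)
  with tri_index(1)[of n] show False by (simp add: k_def)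
qed

lemma tri_index_gt_2: "2 < tri_index n \<Longrightarrow> 5 \<le> n"
proof -
  assume "2 < tri_index n"
  then have "3 * 2 \<le> tri_index n * (tri_index n - 1)" by (intro mult_le_mono) auto
  with tri_index_minimal[of n] \<open>2 < tri_index n\<close> show "5 \<le> n" by linarith
qed

lemma double_tri_index_lt:
  assumes "1 \<le> n"
  shows "2 * tri_index n < n + 4"
proof -
  have "2 * k < n + 4" if k: "2 \<le> k" "k = 2 \<or> k * (k - 1) + 2 < 2 * n" for k
  proof (cases "k \<le> 4")
    case True
    with k(1) have "k = 2 \<or> k = 3 \<or> k = 4" by auto
    with k(2) assms show ?thesis by auto
  next
    case False
    then have "k * 4 \<le> k * (k - 1)" by (intro mult_le_mono2) simp
    with k(2) False show ?thesis by linarith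
  qed
  with tri_index(1) tri_index_minimal show ?thesis by blast
qed

lemma triple_tri_index_lt:
  assumes "6 \<le> n" "n \<noteq> 8"
  shows "3 * tri_index n < n + 4"
proof -
  have "3 * k < n + 4" if k: "2 \<le> k" "k = 2 \<or> k * (k - 1) + 2 < 2 * n" for k
  proof (cases "k \<le> 4")
    case True
    with k(1) have "k = 2 \<or> k = 3 \<or> k = 4" by auto
    with k(2) assms show ?thesis by auto
  next
    case False
    define j where "j = k - 5"
    with False have "k = j + 5" by simp
    then have "k * (k - 1) = j * j + 9 * j + 20" by (simp add: algebra_simps)
    with k(2) False \<open>k = j + 5\<close> show ?thesis by linarith
  qed
  with tri_index(1) tri_index_minimal show ?thesis by blast
qed

lemma simple_graph_complement: "simple_graph V E \<Longrightarrow> simple_graph V (complement V E)"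
  unfolding simple_graph_def complement_def by auto

lemma complement_complement: "simple_graph V E \<Longrightarrow> complement V (complement V E) = E"
  unfolding simple_graph_def complement_def by (intro ext) auto

lemma complement_radius_2:
  assumes "simple_graph V E" "u \<in> V" "v \<in> V" "v \<notin> nbhd E u 2"
  shows "V \<subseteq> nbhd (complement V E) u 2"
proof
  fix w assume "w \<in> V"
  have far: "v \<noteq> u" "\<not> E u v" "\<And>t. E u t \<Longrightarrow> \<not> E t v"
    using assms(4) unfolding nbhd_2 by auto
  show "w \<in> nbhd (complement V E) u 2"
  proof (cases "E u w")
    case True
    have "complement V E u v" using assms(2,3) far by (simp add: complement_def)
    moreover have "\<not> E v w" using far(3)[OF True] assms(1) by (auto simp: simple_graph_def)
    then have "complement V E v w" using assms(3) \<open>w \<in> V\<close> True far(2)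
      by (auto simp: complement_def)
    ultimately show ?thesis unfolding nbhd_2 by blast
  next
    case False
    with assms(2) \<open>w \<in> V\<close> show ?thesis unfolding nbhd_2 by (auto simp: complement_def)
  qed
qed

lemma card_nbhd_1_ge_3:
  assumes "simple_graph V E" "x \<in> V" "\<forall>y. \<exists>w. E x w \<and> w \<noteq> y"
  shows "3 \<le> card (nbhd E x 1)"
proof -
  obtain b1 where b1: "E x b1" using assms(3) by blast
  obtain b2 where b2: "E x b2" "b2 \<noteq> b1" using assms(3) by blast
  have "x \<noteq> b1" "x \<noteq> b2" using b1 b2 assms(1) by (auto simp: simple_graph_def)
  with b2(2) have "card {x, b1, b2} = 3" by simp
  moreover have "{x, b1, b2} \<subseteq> nbhd E x 1" using b1 b2(1) by (simp add: nbhd_1)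
  moreover have "finite V" using assms(1) by (simp add: simple_graph_def)
  then have "finite (nbhd E x 1)" using finite_subset[OF nbhd_subset[OF assms(1,2)]] by blast
  ultimately show ?thesis by (metis card_mono)
qed

lemma nbhd_1_disjoint_of_far:
  assumes "simple_graph V E" "v \<notin> nbhd E u 2"
  shows "nbhd E u 1 \<inter> nbhd E v 1 = {}"
proof (rule ccontr)
  assume "nbhd E u 1 \<inter> nbhd E v 1 \<noteq> {}"
  then obtain w where w: "w \<in> nbhd E u 1" "v \<in> nbhd E w 1" using nbhd_1_sym[OF assms(1)] by blast
  from nbhd_Suc_subset[OF w(1)] w(2) have "v \<in> nbhd E u (Suc 1)" by blast
  with assms(2) show False by (simp only: Suc_1)
qed

lemma card_far_remainder_le_2:
  assumes "simple_graph V E" "card V \<le> 8" "\<forall>x\<in>V. \<forall>y. \<exists>w. E x w \<and> w \<noteq> y"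
    and "u \<in> V" "v \<in> V" "v \<notin> nbhd E u 2"
  shows "card (V - (nbhd E u 1 \<union> nbhd E v 1)) \<le> 2"
proof -
  have fin: "finite V" using assms(1) by (simp add: simple_graph_def)
  have sub: "nbhd E u 1 \<union> nbhd E v 1 \<subseteq> V" using nbhd_subset[OF assms(1)] assms(4,5) by blast
  then have "finite (nbhd E u 1)" "finite (nbhd E v 1)" using fin finite_subset by blast+
  from card_Un_disjoint[OF this nbhd_1_disjoint_of_far[OF assms(1,6)]]
  have "card (nbhd E u 1 \<union> nbhd E v 1) = card (nbhd E u 1) + card (nbhd E v 1)" .
  moreover have "3 \<le> card (nbhd E u 1)" "3 \<le> card (nbhd E v 1)"
    using card_nbhd_1_ge_3[OF assms(1)] assms(3-5) by blast+
  ultimately show ?thesis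
    using assms(2) card_Diff_subset[OF finite_subset[OF sub fin] sub] by linarith
qed

lemma neighbour_of_far_vertex:
  assumes "simple_graph V E" "E c w" "c \<notin> nbhd E u 2" "c \<notin> nbhd E v 2"
  shows "w \<in> V - (nbhd E u 1 \<union> nbhd E v 1) - {c}"
proof -
  have "w \<in> V" "w \<noteq> c" "c \<in> nbhd E w 1" using assms(1,2) by (auto simp: simple_graph_def nbhd_1)
  moreover have "w \<notin> nbhd E x 1" if "c \<notin> nbhd E x (Suc 1)" for x
    using that nbhd_Suc_subset[of w E x 1] \<open>c \<in> nbhd E w 1\<close> by blast
  moreover have "c \<notin> nbhd E u (Suc 1)" "c \<notin> nbhd E v (Suc 1)"
    using assms(3,4) unfolding Suc_1 by blast+
  ultimately show ?thesis by blast
qed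

text \<open>The closed neighbourhoods of u and v are disjoint and take at least six of the at most
  eight vertices. If neither cover exists, at least two vertices lie at distance at least 3
  from both u and v, and such a vertex can only be adjacent to the other one.\<close>
lemma far_pair_near_cover:
  assumes simple: "simple_graph V E" and "card V \<le> 8" and deg: "\<forall>x\<in>V. \<forall>y. \<exists>w. E x w \<and> w \<noteq> y"
    and u: "u \<in> V" and v: "v \<in> V" and far: "v \<notin> nbhd E u 2"
  shows "\<exists>z\<in>V. V \<subseteq> nbhd E u 2 \<union> nbhd E v 1 \<union> {z} \<or> V \<subseteq> nbhd E v 2 \<union> nbhd E u 1 \<union> {z}"
proof (rule ccontr)
  assume none: "\<not> ?thesis"
  define C where "C = V - (nbhd E u 1 \<union> nbhd E v 1)"
  define Uu where "Uu = V - nbhd E u 2 - nbhd E v 1"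
  define Uv where "Uv = V - nbhd E v 2 - nbhd E u 1"
  have "finite C" using simple by (simp add: simple_graph_def C_def)
  have "card C \<le> 2" using card_far_remainder_le_2[OF assms] by (simp add: C_def)
  have "nbhd E u 1 \<subseteq> nbhd E u 2" "nbhd E v 1 \<subseteq> nbhd E v 2" by (rule nbhd_mono, simp)+
  then have "Uu \<subseteq> C" "Uv \<subseteq> C" by (auto simp: Uu_def Uv_def C_def)
  have fill: "U = C" if "U \<subseteq> C" "\<forall>z\<in>V. \<not> U \<subseteq> {z}" for U
  proof -
    from that(2) u obtain a where "a \<in> U" by blast
    with that \<open>finite C\<close> obtain b where "b \<in> U" "b \<noteq> a" by (auto simp: C_def)
    with \<open>a \<in> U\<close> have "card {a, b} = 2" "{a, b} \<subseteq> C" using that(1) by auto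
    with \<open>finite C\<close> \<open>card C \<le> 2\<close> have "{a, b} = C" by (intro card_seteq) auto
    with \<open>a \<in> U\<close> \<open>b \<in> U\<close> that(1) show "U = C" by blast
  qed
  from none have "\<forall>z\<in>V. \<not> Uu \<subseteq> {z}" "\<forall>z\<in>V. \<not> Uv \<subseteq> {z}" unfolding Uu_def Uv_def by blast+
  with fill \<open>Uu \<subseteq> C\<close> \<open>Uv \<subseteq> C\<close> have "Uu = C" "Uv = C" by blast+
  with \<open>\<forall>z\<in>V. \<not> Uu \<subseteq> {z}\<close> u obtain c where c: "c \<in> Uu" "c \<in> Uv" by blast
  then have nbrs: "w \<in> C - {c}" if "E c w" for w
    using neighbour_of_far_vertex[OF simple that] unfolding Uu_def Uv_def C_def by blast
  have "card (C - {c}) \<le> 1" using \<open>card C \<le> 2\<close> \<open>finite C\<close> c(1) \<open>Uu = C\<close> by simp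
  then have "\<forall>a\<in>C - {c}. \<forall>b\<in>C - {c}. a = b" using \<open>finite C\<close> by (simp add: card_le_Suc0_iff_eq)
  moreover obtain w1 w2 where "E c w1" "E c w2" "w1 \<noteq> w2"
    using deg c(1) by (metis Uu_def DiffD1)
  ultimately show False using nbrs by blast
qed

lemma burning_number_le_3_of_far_pair:
  assumes simple: "simple_graph V E" and "card V \<le> 8" and deg: "\<forall>x\<in>V. \<forall>y. \<exists>w. E x w \<and> w \<noteq> y"
    and u: "u \<in> V" and v: "v \<in> V" and far: "v \<notin> nbhd E u 2"
  shows "burning_number V E \<le> 3"
  using far_pair_near_cover[OF assms]
    burning_number_le_3[OF simple u v] burning_number_le_3[OF simple v u]
  by blast

lemma less_5_cases: "(a::nat) < 5 \<Longrightarrow> a = 0 \<or> a = 1 \<or> a = 2 \<or> a = 3 \<or> a = 4"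
  by auto

lemma C5_adjacent_iff:
  assumes "(a::nat) < 5" "b < 5"
  shows "((a + 1) mod 5 = b \<or> (b + 1) mod 5 = a) \<longleftrightarrow> b = (a + 1) mod 5 \<or> b = (a + 4) mod 5"
  using less_5_cases[OF assms(1)] less_5_cases[OF assms(2)] by (elim disjE) simp_all

lemma C5_complement_adjacent_iff:
  assumes "(a::nat) < 5" "b < 5"
  shows "(a \<noteq> b \<and> \<not> ((a + 1) mod 5 = b \<or> (b + 1) mod 5 = a)) \<longleftrightarrow>
    ((2 * a mod 5 + 1) mod 5 = 2 * b mod 5 \<or> (2 * b mod 5 + 1) mod 5 = 2 * a mod 5)"
  using less_5_cases[OF assms(1)] less_5_cases[OF assms(2)] by (elim disjE) simp_all

text \<open>Witness: i \<mapsto> 2i mod 5.\<close>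
lemma iso_C5_complement:
  assumes "iso_C5 V E"
  shows "iso_C5 V (complement V E)"
proof -
  obtain f :: "'a \<Rightarrow> nat" where f: "bij_betw f V {0..<5}"
    and adj: "\<forall>u\<in>V. \<forall>v\<in>V. E u v \<longleftrightarrow> ((f u + 1) mod 5 = f v \<or> (f v + 1) mod 5 = f u)"
    using assms unfolding iso_C5_def by blast
  have "{0..<5::nat} = {0, 1, 2, 3, 4}" by auto
  then have "bij_betw (\<lambda>i. 2 * i mod 5) {0..<5::nat} {0..<5}"
    by (simp add: bij_betw_def) auto
  with f have "bij_betw (\<lambda>u. 2 * f u mod 5) V {0..<5}"
    using bij_betw_trans by (fastforce simp: comp_def)
  moreover have "complement V E u v \<longleftrightarrow>
      ((2 * f u mod 5 + 1) mod 5 = 2 * f v mod 5 \<or> (2 * f v mod 5 + 1) mod 5 = 2 * f u mod 5)"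
    if "u \<in> V" "v \<in> V" for u v
  proof -
    have "f u < 5" "f v < 5" using f that by (auto simp: bij_betw_def)
    moreover have "u = v \<longleftrightarrow> f u = f v" using f that by (auto simp: bij_betw_def inj_on_def)
    ultimately show ?thesis
      using adj that C5_complement_adjacent_iff[of "f u" "f v"] by (auto simp: complement_def)
  qed
  ultimately show ?thesis unfolding iso_C5_def by blast
qed

lemma iso_C5_not_near_dominating:
  assumes "iso_C5 V E" "x \<in> V"
  shows "\<not> V \<subseteq> nbhd E x 1 \<union> {y}"
proof
  assume cover: "V \<subseteq> nbhd E x 1 \<union> {y}"
  obtain f :: "'a \<Rightarrow> nat" where f: "bij_betw f V {0..<5}"
    and adj: "\<forall>u\<in>V. \<forall>v\<in>V. E u v \<longleftrightarrow> ((f u + 1) mod 5 = f v \<or> (f v + 1) mod 5 = f u)"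
    using assms unfolding iso_C5_def by blast
  have fx: "f x < 5" using f assms(2) by (auto simp: bij_betw_def)
  have far: "t = f y" if "t \<in> {0..<5}" "t \<notin> {f x, (f x + 1) mod 5, (f x + 4) mod 5}" for t
  proof -
    from that(1) f have "t \<in> f ` V" by (simp add: bij_betw_def)
    then obtain w where w: "w \<in> V" "t = f w" by blast
    moreover have "f w < 5" using that(1) w(2) by simp
    ultimately have "\<not> E x w" using that(2) adj assms(2) C5_adjacent_iff[OF fx] by auto
    with w cover that(2) show ?thesis by (auto simp: nbhd_1)
  qed
  from far[of "(f x + 2) mod 5"] far[of "(f x + 3) mod 5"]
  have "(f x + 2) mod 5 = (f x + 3) mod 5" using less_5_cases[OF fx] by auto
  then show False by presburger
qed

lemma card_iso_C5: "iso_C5 V E \<Longrightarrow> card V = 5"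
  unfolding iso_C5_def using bij_betw_same_card by fastforce

lemma burning_number_iso_C5:
  assumes "simple_graph V E" "connected_graph V E" "iso_C5 V E"
  shows "burning_number V E = 3"
proof -
  have "card V = 5" using card_iso_C5[OF assms(3)] .
  then have "V \<noteq> {}" by auto
  from burning_number_le_of_card[OF assms(1,2) this, of 3] \<open>card V = 5\<close>
  have "burning_number V E \<le> 3" by simp
  moreover obtain xs where "burning_seq V E xs" using burning_seq_exists[OF assms(1,2)] by blast
  then have "\<not> burning_number V E \<le> 2"
    using burning_number_le_2_iff[OF assms(1) _ \<open>V \<noteq> {}\<close>] iso_C5_not_near_dominating[OF assms(3)]
    by blast
  ultimately show ?thesis by simp
qed

lemma degree_2_of_card_5:
  assumes "simple_graph V E" "card V = 5" "x \<in> V"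
    and "\<forall>y. \<exists>w. E x w \<and> w \<noteq> y" "\<forall>y. \<not> V \<subseteq> nbhd E x 1 \<union> {y}"
  shows "\<exists>b e. b \<noteq> e \<and> {w. E x w} = {b, e}"
proof -
  have fin: "finite V" and irrefl: "\<And>a. \<not> E a a" and in_V: "\<And>a b. E a b \<Longrightarrow> b \<in> V"
    using assms(1) by (auto simp: simple_graph_def)
  obtain b where b: "E x b" using assms(4) by blast
  obtain e where e: "E x e" "e \<noteq> b" using assms(4) by blast
  have "w = b \<or> w = e" if c: "E x w" for w
  proof (rule ccontr)
    assume "\<not> ?thesis"
    moreover have "x \<noteq> b" "x \<noteq> e" "x \<noteq> w" using irrefl b e c by blast+
    ultimately have "card {x, b, e, w} = 4" using e(2) by auto
    moreover have "{x, b, e, w} \<subseteq> V" using assms(3) in_V b e c by blast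
    ultimately have "card (V - {x, b, e, w}) = 1" using fin assms(2) by (simp add: card_Diff_subset)
    then obtain y where "V - {x, b, e, w} = {y}" by (rule card_1_singletonE)
    then have "V \<subseteq> nbhd E x 1 \<union> {y}" using b e c by (auto simp: nbhd_1)
    with assms(5) show False by blast
  qed
  with b e show ?thesis by blast
qed

lemma closed_subset_card:
  assumes "simple_graph V E" "\<forall>x\<in>V. \<exists>b e. b \<noteq> e \<and> {w. E x w} = {b, e}"
    and "S \<subseteq> V" "\<forall>x\<in>S. \<forall>w. E x w \<longrightarrow> w \<in> S" "S \<noteq> V"
  shows "card S + 3 \<le> card V"
proof -
  have fin: "finite V" and irrefl: "\<And>a. \<not> E a a" and sym: "\<And>a b. E a b \<Longrightarrow> E b a"
    and in_V: "\<And>a b. E a b \<Longrightarrow> b \<in> V"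
    using assms(1) by (auto simp: simple_graph_def)
  obtain w where w: "w \<in> V" "w \<notin> S" using assms(3,5) by blast
  then obtain b e where "b \<noteq> e" "{u. E w u} = {b, e}" using assms(2) by blast
  then have "E w b" "E w e" by auto
  \<comment> \<open>the neighbours of a vertex outside a closed set lie outside it as well\<close>
  then have "{w, b, e} \<subseteq> V - S" using w assms(4) sym in_V by blast
  moreover have "w \<noteq> b" "w \<noteq> e" using \<open>E w b\<close> \<open>E w e\<close> irrefl by blast+
  then have "card {w, b, e} = 3" using \<open>b \<noteq> e\<close> by simp
  ultimately have "3 \<le> card (V - S)" using fin by (metis card_mono finite_Diff)
  then show ?thesis using fin assms(3) by (simp add: card_Diff_subset finite_subset)
qed

lemma other_neighbour:
  assumes "simple_graph V E" "\<forall>x\<in>V. \<exists>b e. b \<noteq> e \<and> {w. E x w} = {b, e}" "E x y"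
  shows "\<exists>z. z \<noteq> y \<and> {w. E x w} = {y, z}"
proof -
  have "x \<in> V" using assms(1,3) by (simp add: simple_graph_def)
  then obtain b e where "b \<noteq> e" and N: "{w. E x w} = {b, e}" using assms(2) by blast
  moreover have "y = b \<or> y = e" using assms(3) N by blast
  ultimately show ?thesis by (metis insert_commute)
qed

lemma five_cycle_path:
  assumes simple: "simple_graph V E" and card: "card V = 5"
    and reg: "\<forall>x\<in>V. \<exists>b e. b \<noteq> e \<and> {w. E x w} = {b, e}"
  obtains a b c d e where "V = {a, b, c, d, e}" "distinct [a, b, c, d, e]"
    "{w. E a w} = {b, e}" "{w. E b w} = {a, c}" "{w. E e w} = {a, d}"
proof -
  have fin: "finite V" and irrefl: "\<And>a. \<not> E a a" and sym: "\<And>a b. E a b \<Longrightarrow> E b a"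
    and in_V: "\<And>a b. E a b \<Longrightarrow> b \<in> V"
    using simple by (auto simp: simple_graph_def)
  note other = other_neighbour[OF simple reg]
  have "V \<noteq> {}" using card by auto
  then obtain a where "a \<in> V" by blast
  then obtain b e where "b \<noteq> e" and Na: "{w. E a w} = {b, e}" using reg by blast
  then have "E a b" "E a e" by auto
  obtain c where "c \<noteq> a" and Nb: "{w. E b w} = {a, c}" using other[OF sym[OF \<open>E a b\<close>]] by blast
  obtain d where "d \<noteq> a" and Ne: "{w. E e w} = {a, d}" using other[OF sym[OF \<open>E a e\<close>]] by blast
  have "E b c" "E e d" using Nb Ne by auto
  have "a \<noteq> b" "a \<noteq> e" "b \<noteq> c" "e \<noteq> d"
    using irrefl \<open>E a b\<close> \<open>E a e\<close> \<open>E b c\<close> \<open>E e d\<close> by metis+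
  have V: "{a, b, c, e} \<subseteq> V" "d \<in> V"
    using \<open>a \<in> V\<close> in_V \<open>E a b\<close> \<open>E a e\<close> \<open>E b c\<close> \<open>E e d\<close> by auto
  \<comment> \<open>a triangle or a 4-cycle through a would be a closed set that is too large\<close>
  have "c \<noteq> e"
  proof
    assume "c = e"
    with sym[OF \<open>E b c\<close>] Ne \<open>a \<noteq> b\<close> have "d = b" by auto
    with Na Nb Ne \<open>c = e\<close> have "\<forall>x\<in>{a, b, e}. \<forall>w. E x w \<longrightarrow> w \<in> {a, b, e}" by auto
    moreover have "card {a, b, e} = 3" using \<open>a \<noteq> b\<close> \<open>a \<noteq> e\<close> \<open>b \<noteq> e\<close> by simp
    ultimately show False using closed_subset_card[OF simple reg, of "{a, b, e}"] V card by fastforce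
  qed
  have "c \<noteq> d"
  proof
    assume "c = d"
    with sym[OF \<open>E b c\<close>] sym[OF \<open>E e d\<close>] other[of c b] \<open>b \<noteq> e\<close>
    have Nc: "{w. E c w} = {b, e}" by (metis (mono_tags) insert_iff mem_Collect_eq singletonD)
    with Na Nb Ne \<open>c = d\<close> have "\<forall>x\<in>{a, b, c, e}. \<forall>w. E x w \<longrightarrow> w \<in> {a, b, c, e}" by auto
    moreover have "card {a, b, c, e} = 4"
      using \<open>a \<noteq> b\<close> \<open>a \<noteq> e\<close> \<open>b \<noteq> e\<close> \<open>c \<noteq> a\<close> \<open>b \<noteq> c\<close> \<open>c \<noteq> e\<close> by simp
    ultimately show False
      using closed_subset_card[OF simple reg, of "{a, b, c, e}"] V card by fastforce
  qed
  have "b \<noteq> d" using Nb sym[OF \<open>E e d\<close>] \<open>a \<noteq> e\<close> \<open>c \<noteq> e\<close> by auto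
  have dist: "distinct [a, b, c, d, e]"
    using \<open>a \<noteq> b\<close> \<open>a \<noteq> e\<close> \<open>b \<noteq> e\<close> \<open>c \<noteq> a\<close> \<open>b \<noteq> c\<close> \<open>c \<noteq> e\<close> \<open>d \<noteq> a\<close> \<open>b \<noteq> d\<close>
      \<open>c \<noteq> d\<close> \<open>e \<noteq> d\<close>
    by auto
  then have "V = {a, b, c, d, e}" using V card fin by (intro card_seteq[symmetric]) auto
  with dist Na Nb Ne show ?thesis using that by blast
qed

lemma five_cycle_labelling:
  assumes simple: "simple_graph V E" and card: "card V = 5"
    and reg: "\<forall>x\<in>V. \<exists>b e. b \<noteq> e \<and> {w. E x w} = {b, e}"
  obtains a b c d e where "V = {a, b, c, d, e}" "distinct [a, b, c, d, e]"
    "{w. E a w} = {b, e}" "{w. E b w} = {a, c}" "{w. E c w} = {b, d}"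
    "{w. E d w} = {c, e}" "{w. E e w} = {a, d}"
proof -
  have irrefl: "\<And>a. \<not> E a a" and sym: "\<And>a b. E a b \<Longrightarrow> E b a"
    and in_V: "\<And>a b. E a b \<Longrightarrow> b \<in> V"
    using simple by (auto simp: simple_graph_def)
  note other = other_neighbour[OF simple reg]
  obtain a b c d e where V: "V = {a, b, c, d, e}" and dist: "distinct [a, b, c, d, e]"
    and Na: "{w. E a w} = {b, e}" and Nb: "{w. E b w} = {a, c}" and Ne: "{w. E e w} = {a, d}"
    by (rule five_cycle_path[OF assms])
  have "E b c" "E e d" using Nb Ne by auto
  obtain r where "r \<noteq> b" and Nc: "{w. E c w} = {b, r}" using other[OF sym[OF \<open>E b c\<close>]] by blast
  then have "r \<in> V" "r \<noteq> c" using in_V irrefl by auto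
  have "\<not> E a c" "\<not> E e c" using Na Ne dist unfolding set_eq_iff by auto
  have "E c r" using Nc by blast
  then have "r \<noteq> a" "r \<noteq> e" using sym \<open>\<not> E a c\<close> \<open>\<not> E e c\<close> by blast+
  with \<open>r \<in> V\<close> V \<open>r \<noteq> b\<close> \<open>r \<noteq> c\<close> have "r = d" by blast
  obtain r' where Nd: "{w. E d w} = {e, r'}" using other[OF sym[OF \<open>E e d\<close>]] by blast
  have "E d c" using Nc \<open>r = d\<close> sym by blast
  then have "c \<in> {e, r'}" using Nd by blast
  with dist Nd have "{w. E d w} = {c, e}" by (auto simp: insert_commute)
  from that[OF V dist Na Nb Nc[unfolded \<open>r = d\<close>] this Ne] show ?thesis .
qed

lemma iso_C5_of_2_regular:
  assumes "simple_graph V E" "card V = 5" "\<forall>x\<in>V. \<exists>b e. b \<noteq> e \<and> {w. E x w} = {b, e}"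
  shows "iso_C5 V E"
proof -
  obtain a b c d e where V: "V = {a, b, c, d, e}" and dist: "distinct [a, b, c, d, e]"
    and N: "{w. E a w} = {b, e}" "{w. E b w} = {a, c}" "{w. E c w} = {b, d}"
      "{w. E d w} = {c, e}" "{w. E e w} = {a, d}"
    by (rule five_cycle_labelling[OF assms])
  define f where "f x = (if x = a then 0 else if x = b then 1 else if x = c then 2
    else if x = d then 3 else (4::nat))" for x
  have f: "f a = 0" "f b = 1" "f c = 2" "f d = 3" "f e = 4" using dist by (auto simp: f_def)
  have "{0..<5::nat} = {0, 1, 2, 3, 4}" by auto
  with f dist have "bij_betw f V {0..<5}" by (auto simp: V bij_betw_def inj_on_def)
  moreover have "\<forall>u\<in>V. \<forall>v\<in>V. E u v \<longleftrightarrow> ((f u + 1) mod 5 = f v \<or> (f v + 1) mod 5 = f u)"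
    using f dist N unfolding V set_eq_iff by auto
  ultimately show ?thesis unfolding iso_C5_def by blast
qed

lemma iso_C5_of_card_5:
  assumes "simple_graph V E" "card V = 5" "\<forall>x\<in>V. \<forall>y. \<exists>w. E x w \<and> w \<noteq> y"
    and "\<forall>x\<in>V. \<forall>y. \<not> V \<subseteq> nbhd E x 1 \<union> {y}"
  shows "iso_C5 V E"
  using degree_2_of_card_5[OF assms(1,2)] assms(3,4)
  by (intro iso_C5_of_2_regular[OF assms(1,2)]) blast

lemma undominated_of_burning_number_ge_3:
  assumes "simple_graph V E" "connected_graph V E" "3 \<le> burning_number V E"
  shows "\<forall>x\<in>V. \<forall>y. \<not> V \<subseteq> nbhd E x 1 \<union> {y}"
proof -
  have "V \<noteq> {}" using assms(3) by auto
  obtain xs where "burning_seq V E xs" using burning_seq_exists[OF assms(1,2)] by blast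
  from burning_number_le_2_iff[OF assms(1) this \<open>V \<noteq> {}\<close>] assms(3) show ?thesis by auto
qed

lemma min_degree_2_of_complement:
  assumes "simple_graph V E" "\<forall>x\<in>V. \<forall>y. \<not> V \<subseteq> nbhd (complement V E) x 1 \<union> {y}"
  shows "\<forall>x\<in>V. \<forall>y. \<exists>w. E x w \<and> w \<noteq> y"
proof (intro ballI allI)
  fix x y assume "x \<in> V"
  show "\<exists>w. E x w \<and> w \<noteq> y"
  proof (rule ccontr)
    assume "\<not> ?thesis"
    with \<open>x \<in> V\<close> have "V \<subseteq> nbhd (complement V E) x 1 \<union> {y}" by (auto simp: nbhd_1 complement_def)
    with assms(2) \<open>x \<in> V\<close> show False by blast
  qed
qed

lemma product_lt_of_far_pair:
  assumes simple: "simple_graph V E" and conn: "connected_graph V E" and "6 \<le> card V"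
    and deg: "\<forall>x\<in>V. \<forall>y. \<exists>w. E x w \<and> w \<noteq> y"
    and u: "u \<in> V" and v: "v \<in> V" and far: "v \<notin> nbhd E u 2"
  shows "burning_number V E * burning_number V (complement V E) < card V + 4"
proof -
  have "V \<subseteq> nbhd (complement V E) u 2" using complement_radius_2[OF simple u v far] .
  then have H: "burning_number V (complement V E) \<le> 3"
    using burning_number_le_3[OF simple_graph_complement[OF simple] u u u] by blast
  show ?thesis
  proof (cases "card V = 8")
    case True
    then have "burning_number V E \<le> 3"
      using burning_number_le_3_of_far_pair[OF simple _ deg u v far] by simp
    then have "burning_number V E * burning_number V (complement V E) \<le> 3 * 3"
      using H by (rule mult_le_mono)
    with True show ?thesis by simp
  next
    case False
    have "V \<noteq> {}" using u by blast
    from burning_number_le_of_card[OF simple conn this tri_index] H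
    have "burning_number V E * burning_number V (complement V E) \<le> tri_index (card V) * 3"
      by (rule mult_le_mono)
    with triple_tri_index_lt[OF \<open>6 \<le> card V\<close> False] show ?thesis by linarith
  qed
qed

lemma product_lt_of_burning_numbers_ge_3:
  assumes simple: "simple_graph V E" and conn: "connected_graph V E"
    and conn': "connected_graph V (complement V E)" and "\<not> iso_C5 V E"
    and G3: "3 \<le> burning_number V E" and H3: "3 \<le> burning_number V (complement V E)"
  shows "burning_number V E * burning_number V (complement V E) < card V + 4"
proof -
  define H where "H = complement V E"
  have simple': "simple_graph V H" and HH: "complement V H = E"
    using simple_graph_complement[OF simple] complement_complement[OF simple]
    by (simp_all add: H_def)
  have "V \<noteq> {}" using G3 by auto
  have undomG: "\<forall>x\<in>V. \<forall>y. \<not> V \<subseteq> nbhd E x 1 \<union> {y}"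
    using undominated_of_burning_number_ge_3[OF simple conn G3] .
  have undomH: "\<forall>x\<in>V. \<forall>y. \<not> V \<subseteq> nbhd H x 1 \<union> {y}"
    using undominated_of_burning_number_ge_3[OF simple' conn'[folded H_def]] H3 by (simp add: H_def)
  have degG: "\<forall>x\<in>V. \<forall>y. \<exists>w. E x w \<and> w \<noteq> y"
    using min_degree_2_of_complement[OF simple] undomH by (simp add: H_def)
  have degH: "\<forall>x\<in>V. \<forall>y. \<exists>w. H x w \<and> w \<noteq> y"
    using min_degree_2_of_complement[OF simple'] undomG by (simp add: HH)
  have "card V \<noteq> 5" using iso_C5_of_card_5[OF simple _ degG undomG] \<open>\<not> iso_C5 V E\<close> by blast
  moreover have "2 < tri_index (card V)"
    using G3 burning_number_le_of_card[OF simple conn \<open>V \<noteq> {}\<close> tri_index] by linarith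
  ultimately have "6 \<le> card V" using tri_index_gt_2 by fastforce
  consider (farG) u v where "u \<in> V" "v \<in> V" "v \<notin> nbhd E u 2"
    | (farH) u v where "u \<in> V" "v \<in> V" "v \<notin> nbhd H u 2"
    | (near) "\<forall>u\<in>V. V \<subseteq> nbhd E u 2 \<and> V \<subseteq> nbhd H u 2" by blast
  then show ?thesis
  proof cases
    case farG
    from product_lt_of_far_pair[OF simple conn \<open>6 \<le> card V\<close> degG farG] show ?thesis .
  next
    case farH
    from product_lt_of_far_pair[OF simple' conn'[folded H_def] \<open>6 \<le> card V\<close> degH farH]
    have "burning_number V H * burning_number V E < card V + 4" unfolding HH .
    then show ?thesis by (simp add: H_def mult.commute)
  next
    case near
    obtain u where u: "u \<in> V" using \<open>V \<noteq> {}\<close> by blast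
    with near have "burning_number V E \<le> 3" "burning_number V H \<le> 3"
      using burning_number_le_3[OF simple u u u] burning_number_le_3[OF simple' u u u] by blast+
    then have "burning_number V E * burning_number V H \<le> 3 * 3" by (rule mult_le_mono)
    with \<open>6 \<le> card V\<close> show ?thesis by (simp add: H_def)
  qed
qed

lemma product_lt_of_not_iso_C5:
  assumes simple: "simple_graph V E" and conn: "connected_graph V E"
    and conn': "connected_graph V (complement V E)" and "\<not> iso_C5 V E"
  shows "burning_number V E * burning_number V (complement V E) < card V + 4"
proof (cases "V = {}")
  case True
  then show ?thesis by simp
next
  case False
  with simple have "1 \<le> card V" by (simp add: simple_graph_def Suc_le_eq card_gt_0_iff)
  note bound = burning_number_le_of_card[OF _ _ False tri_index]
  have G: "burning_number V E \<le> tri_index (card V)" using bound simple conn by blast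
  have H: "burning_number V (complement V E) \<le> tri_index (card V)"
    using bound simple_graph_complement[OF simple] conn' by blast
  consider "burning_number V E \<le> 2" | "burning_number V (complement V E) \<le> 2"
    | "3 \<le> burning_number V E" "3 \<le> burning_number V (complement V E)" by linarith
  then show ?thesis
  proof cases
    case 1
    from mult_le_mono[OF this H] double_tri_index_lt[OF \<open>1 \<le> card V\<close>] show ?thesis by linarith
  next
    case 2
    from mult_le_mono[OF G this] double_tri_index_lt[OF \<open>1 \<le> card V\<close>] show ?thesis by linarith
  next
    case 3
    from product_lt_of_burning_numbers_ge_3[OF assms this] show ?thesis .
  qed
qed

theorem theorem2:
  fixes V :: "'a set" and E :: "'a \<Rightarrow> 'a \<Rightarrow> bool"
  assumes "simple_graph V E"
    and "connected_graph V E"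
    and "connected_graph V (complement V E)"
  shows "burning_number V E * burning_number V (complement V E) \<le> card V + 4
       \<and> (burning_number V E * burning_number V (complement V E) = card V + 4 \<longleftrightarrow> iso_C5 V E)"
proof (cases "iso_C5 V E")
  case True
  then have "card V = 5" "burning_number V E = 3" "burning_number V (complement V E) = 3"
    using card_iso_C5 burning_number_iso_C5[OF assms(1,2)]
      burning_number_iso_C5[OF simple_graph_complement[OF assms(1)] assms(3) iso_C5_complement]
    by blast+
  with True show ?thesis by simp
next
  case False
  with product_lt_of_not_iso_C5[OF assms] show ?thesis by simp
qed

end
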